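(* Let $X_0$ be a smooth closed curve which is star-shaped with respect to a point $O$ (taken as origin), so that in polar coordinates $X_0(\theta)=r_0(\theta)(\cos\theta,\sin\theta)$ with $r_0>0$. Let $r:[0,2\pi]\times[0,\omega)\to(0,\infty)$ be a smooth solution, $2\pi$-periodic in $\theta$, of $$\frac{\partial r}{\partial t}=\frac{1}{g^2}\frac{\partial^2 r}{\partial\theta^2}-\frac{2}{rg^2}\left(\frac{\partial r}{\partial\theta}\right)^2-\frac{r}{g^2}+\frac{2\pi g}{rL},\qquad r(\theta,0)=r_0(\theta),$$ where $g=\sqrt{r^2+(\partial r/\partial\theta)^2}$ and $L(t)=\int_0^{2\pi}g(\theta,t)\,d\theta$, so that $X(\theta,t)=r(\theta,t)(\cos\theta,\sin\theta)$ solves Gage's area-preserving flow up to a tangential reparametrization. If $r(\theta,t)\ge c>0$ for all $(\theta,t)\in[0,2\pi]\times[0,\omega)$ for some constant $c$, then for all such $(\theta,t)$ $$r(\theta,t)\le \frac{L_0}{2},\qquad \left|\frac{\partial r}{\partial\theta}(\theta,t)\right|\le C_1,$$ where $L_0$ is the length of $X_0$ and $C_1=\max\left\{\max_\theta\left|\frac{\partial r}{\partial\theta}(\theta,0)\right|,\frac{3L_0}{\pi}\right\}$.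
   Context: Gage's area-preserving flow: $\frac{\partial X}{\partial t}=\left(\kappa-\frac{2\pi}{L}\right)N$, where $\kappa$ is the curvature, $N$ the inward unit normal, $L$ the length of the evolving curve. A closed curve is star-shaped with respect to the origin $O$ if $\det(X(s),T(s))>0$ for all arc length parameters $s$, $T$ the unit tangent. All curves are regular, closed and embedded. *)

theory Defs
  imports "HOL-Analysis.Analysis"
begin

text \<open>Smoothness (C-infinity) of a function r(theta,t) on R x [0,w), expressed through a
  family D i j of all mixed partial derivatives (D i j = d^i/dtheta^i d^j/dt^j r):
  D 0 0 = r, every D i j has partial derivatives D (i+1) j in theta and D i (j+1) in t
  (one-sided at t = 0), and every D i j is jointly continuous.\<close>
definition smooth_partials ::
  "real \<Rightarrow> (real \<Rightarrow> real \<Rightarrow> real) \<Rightarrow> (nat \<Rightarrow> nat \<Rightarrow> real \<Rightarrow> real \<Rightarrow> real) \<Rightarrow> bool" where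
  "smooth_partials \<omega> r D \<longleftrightarrow>
     D 0 0 = r \<and>
     (\<forall>i j. \<forall>\<theta>. \<forall>t\<in>{0..<\<omega>}.
        ((\<lambda>x. D i j x t) has_real_derivative D (Suc i) j \<theta> t) (at \<theta>) \<and>
        ((\<lambda>s. D i j \<theta> s) has_real_derivative D i (Suc j) \<theta> t) (at t within {0..<\<omega>})) \<and>
     (\<forall>i j. continuous_on (UNIV \<times> {0..<\<omega>}) (\<lambda>(\<theta>, t). D i j \<theta> t))"

definition polar_g :: "(nat \<Rightarrow> nat \<Rightarrow> real \<Rightarrow> real \<Rightarrow> real) \<Rightarrow> real \<Rightarrow> real \<Rightarrow> real" where
  "polar_g D \<theta> t = sqrt ((D 0 0 \<theta> t)\<^sup>2 + (D 1 0 \<theta> t)\<^sup>2)"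

definition polar_length :: "(nat \<Rightarrow> nat \<Rightarrow> real \<Rightarrow> real \<Rightarrow> real) \<Rightarrow> real \<Rightarrow> real" where
  "polar_length D t = integral {0..2*pi} (\<lambda>\<theta>. polar_g D \<theta> t)"

end

theory Submission
  imports Defs "HOL-Library.Periodic_Fun"
begin

text \<open>
  As long as \<open>r > 0\<close>, the curve \<open>X(\<theta>) = r(\<theta>) (cos \<theta>, sin \<theta>)\<close> is closed and passes through
  the antipodal points \<open>X(\<theta>)\<close> and \<open>X(\<theta> + \<pi>)\<close>, whose distance \<open>r(\<theta>) + r(\<theta> + \<pi>)\<close> bounds
  both arcs between them from below; hence \<open>2 r < L(t)\<close>. The flow shortens the curve: with
  \<open>a = 2\<pi>/L\<close> and curvature \<open>\<kappa>\<close>, \<open>dL/dt = - \<integral> (\<kappa> - a)\<^sup>2 g d\<theta>\<close>, because the total curvature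
  \<open>\<integral> \<kappa> g d\<theta>\<close> is \<open>2\<pi>\<close>. So \<open>r \<le> L(t)/2 \<le> L\<^sub>0/2\<close>.

  At a spatial maximum of \<open>r\<^sub>\<theta>\<^sup>2\<close> we have \<open>r\<^sub>\<theta>\<^sub>\<theta> = 0\<close> and \<open>r\<^sub>\<theta> r\<^sub>\<theta>\<^sub>\<theta>\<^sub>\<theta> \<le> 0\<close>, and
  differentiating the equation in \<open>\<theta>\<close> gives \<open>r\<^sub>\<theta> \<partial>\<^sub>t r\<^sub>\<theta> < 0\<close> once \<open>|r\<^sub>\<theta>| > 3L\<^sub>0/\<pi>\<close>:
  then \<open>r < L\<^sub>0/2 < 2|r\<^sub>\<theta>|/3\<close> and the term \<open>-a r\<^sub>\<theta>\<^sup>2 g\<^sup>3\<close> dominates. A maximum principle for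
  \<open>\<theta>\<close>-periodic functions then bounds \<open>r\<^sub>\<theta>\<^sup>2\<close> by the larger of its initial maximum and
  \<open>(3L\<^sub>0/\<pi>)\<^sup>2\<close>.
\<close>

lemma periodic_value_in_first_period:
  fixes f :: "real \<Rightarrow> 'a"
  assumes "periodic_fun_simple f c" and "c > 0"
  obtains y where "y \<in> {0..c}" "f y = f x"
proof
  define n where "n = \<lfloor>x / c\<rfloor>"
  have "of_int n \<le> x / c" "x / c < of_int n + 1"
    unfolding n_def by linarith+
  then have "of_int n * c \<le> x" "x < (of_int n + 1) * c"
    using assms(2) by (auto simp: field_simps)
  then show "x - of_int n * c \<in> {0..c}" by (auto simp: algebra_simps)
  interpret periodic_fun_simple f c by (rule assms(1))
  show "f (x - of_int n * c) = f x" by (rule minus_of_int)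
qed

lemma periodic_continuous_attains_max:
  fixes f :: "real \<Rightarrow> real"
  assumes "periodic_fun_simple f c" "c > 0" and "continuous_on {0..c} f"
  obtains x where "x \<in> {0..c}" "\<And>y. f y \<le> f x"
proof -
  obtain x where "x \<in> {0..c}" and max: "\<And>y. y \<in> {0..c} \<Longrightarrow> f y \<le> f x"
    using continuous_attains_sup[OF compact_Icc _ assms(3)] assms(2) by auto
  show thesis
  proof (rule that[OF \<open>x \<in> {0..c}\<close>])
    fix y
    obtain y' where "y' \<in> {0..c}" "f y' = f y" using periodic_value_in_first_period[OF assms(1,2)] .
    then show "f y \<le> f x" using max by metis
  qed
qed

lemma second_derivative_nonpos_at_max:
  fixes f f' :: "real \<Rightarrow> real"
  assumes f': "\<And>y. (f has_real_derivative f' y) (at y)"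
    and f'': "(f' has_real_derivative f'') (at x)"
    and max: "\<And>y. f y \<le> f x"
  shows "f'' \<le> 0"
proof (rule ccontr)
  assume "\<not> f'' \<le> 0"
  then obtain d where "d > 0" and f'_inc: "\<And>h. h > 0 \<Longrightarrow> h < d \<Longrightarrow> f' x < f' (x + h)"
    using DERIV_pos_inc_right[OF f''] by force
  have "f' x = 0" by (rule DERIV_local_max[OF f' zero_less_one]) (use max in auto)
  obtain z where z: "x < z" "z < x + d / 2" "f (x + d / 2) - f x = d / 2 * f' z"
    using MVT2[of x "x + d / 2" f f'] f' \<open>d > 0\<close> by auto
  have "f' z > 0" using f'_inc[of "z - x"] z \<open>f' x = 0\<close> by auto
  then have "d / 2 * f' z > 0" using \<open>d > 0\<close> by simp
  then have "f (x + d / 2) > f x" using z(3) by linarith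
  with max show False by (simp add: not_le[symmetric])
qed

lemma first_time_of_superlevel_set:
  fixes P :: "real \<Rightarrow> real \<Rightarrow> real"
  assumes cont: "continuous_on ({a..b} \<times> {0..T}) (\<lambda>(x, t). P x t)"
    and "x0 \<in> {a..b}" "t0 \<in> {0..T}" "K \<le> P x0 t0"
  obtains ts x where "ts \<in> {0..T}" "x \<in> {a..b}" "K \<le> P x ts"
    "\<And>x t. x \<in> {a..b} \<Longrightarrow> t \<in> {0..<ts} \<Longrightarrow> P x t < K"
proof -
  define S where "S = ({a..b} \<times> {0..T}) \<inter> (\<lambda>(x, t). P x t) -` {K..}"
  have "bounded S"
    unfolding S_def by (rule bounded_subset[OF bounded_Times Int_lower1]) auto
  moreover have "closed S"
    unfolding S_def by (rule continuous_closed_preimage[OF cont]) (auto intro: closed_Times)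
  ultimately have "compact S" by (simp add: compact_eq_bounded_closed)
  then have "compact (snd ` S)" by (rule compact_continuous_image[rotated]) (intro continuous_intros)
  moreover have "(x0, t0) \<in> S" unfolding S_def using assms by auto
  ultimately obtain ts where "ts \<in> snd ` S" and first: "\<And>t. t \<in> snd ` S \<Longrightarrow> ts \<le> t"
    using compact_attains_inf[of "snd ` S"] by blast
  then obtain x where "(x, ts) \<in> S" by auto
  show thesis
  proof (rule that)
    show "ts \<in> {0..T}" "x \<in> {a..b}" "K \<le> P x ts" using \<open>(x, ts) \<in> S\<close> by (auto simp: S_def)
    show "P y t < K" if "y \<in> {a..b}" "t \<in> {0..<ts}" for y t
    proof (rule ccontr)
      assume "\<not> P y t < K"
      then have "t \<in> snd ` S" using that \<open>ts \<in> {0..T}\<close> by (force simp: S_def)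
      with first[of t] that show False by simp
    qed
  qed
qed

lemma periodic_max_principle:
  fixes P P' :: "real \<Rightarrow> real \<Rightarrow> real"
  assumes "c > 0"
    and cont: "continuous_on (UNIV \<times> {0..<\<omega>}) (\<lambda>(\<theta>, t). P \<theta> t)"
    and per: "\<And>t. t \<in> {0..<\<omega>} \<Longrightarrow> periodic_fun_simple (\<lambda>\<theta>. P \<theta> t) c"
    and der: "\<And>\<theta> t. t \<in> {0..<\<omega>} \<Longrightarrow>
      ((\<lambda>s. P \<theta> s) has_real_derivative P' \<theta> t) (at t within {0..<\<omega>})"
    and init: "\<And>\<theta>. P \<theta> 0 \<le> K"
    and decreasing_at_max: "\<And>\<theta> t. t \<in> {0<..<\<omega>} \<Longrightarrow> (\<And>\<phi>. P \<phi> t \<le> P \<theta> t) \<Longrightarrow> K < P \<theta> t \<Longrightarrow>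
      P' \<theta> t < 0"
    and t1: "t1 \<in> {0..<\<omega>}"
  shows "P \<theta>1 t1 \<le> K"
  \<comment> \<open>At the first time a level \<open>K' > K\<close> is reached, the spatial maximum is decreasing,
    so it was above \<open>K'\<close> shortly before.\<close>
proof (rule ccontr)
  assume "\<not> P \<theta>1 t1 \<le> K"
  define K' where "K' = (K + P \<theta>1 t1) / 2"
  have "K < K'" using \<open>\<not> P \<theta>1 t1 \<le> K\<close> by (simp add: K'_def)
  obtain \<theta>0 where "\<theta>0 \<in> {0..c}" "P \<theta>0 t1 = P \<theta>1 t1"
    using periodic_value_in_first_period[OF per[OF t1] \<open>c > 0\<close>] .
  moreover have "{0..c} \<times> {0..t1} \<subseteq> UNIV \<times> {0..<\<omega>}" using t1 by auto
  moreover have "K' \<le> P \<theta>0 t1" using \<open>K < K'\<close> \<open>P \<theta>0 t1 = P \<theta>1 t1\<close> by (simp add: K'_def)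
  moreover have "t1 \<in> {0..t1}" using t1 by simp
  ultimately obtain ts \<theta>s where "ts \<in> {0..t1}" "\<theta>s \<in> {0..c}" "K' \<le> P \<theta>s ts"
    and before: "\<And>\<theta> t. \<theta> \<in> {0..c} \<Longrightarrow> t \<in> {0..<ts} \<Longrightarrow> P \<theta> t < K'"
    using first_time_of_superlevel_set[OF continuous_on_subset[OF cont]] by blast
  have "ts \<noteq> 0" using init[of \<theta>s] \<open>K' \<le> P \<theta>s ts\<close> \<open>K < K'\<close> by auto
  with \<open>ts \<in> {0..t1}\<close> t1 have "ts \<in> {0<..<\<omega>}" by auto
  then have "continuous_on {0..c} (\<lambda>\<theta>. P \<theta> ts)"
    by (intro continuous_on_compose2[OF cont, of _ "\<lambda>\<theta>. (\<theta>, ts)", simplified] continuous_intros)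
      auto
  moreover have "periodic_fun_simple (\<lambda>\<theta>. P \<theta> ts) c" using per \<open>ts \<in> {0<..<\<omega>}\<close> by simp
  ultimately obtain \<theta>m where "\<theta>m \<in> {0..c}" and max: "\<And>\<phi>. P \<phi> ts \<le> P \<theta>m ts"
    using periodic_continuous_attains_max \<open>c > 0\<close> by blast
  have "K' \<le> P \<theta>m ts" using max[of \<theta>s] \<open>K' \<le> P \<theta>s ts\<close> by simp
  then have "P' \<theta>m ts < 0" using decreasing_at_max[OF \<open>ts \<in> {0<..<\<omega>}\<close> max] \<open>K < K'\<close> by simp
  then obtain d where "d > 0" and larger_before:
    "\<And>h. h > 0 \<Longrightarrow> ts - h \<in> {0..<\<omega>} \<Longrightarrow> h < d \<Longrightarrow> P \<theta>m ts < P \<theta>m (ts - h)"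
    using has_real_derivative_neg_dec_left[OF der] \<open>ts \<in> {0<..<\<omega>}\<close>
    by (metis greaterThanLessThan_iff atLeastLessThan_iff less_imp_le)
  define h where "h = min d ts / 2"
  have "h > 0" "h < d" "h < ts" using \<open>d > 0\<close> \<open>ts \<in> {0<..<\<omega>}\<close> by (auto simp: h_def)
  then have "K' < P \<theta>m (ts - h)"
    using larger_before[of h] \<open>K' \<le> P \<theta>m ts\<close> \<open>ts \<in> {0<..<\<omega>}\<close> by auto
  with before[OF \<open>\<theta>m \<in> {0..c}\<close>, of "ts - h"] \<open>h > 0\<close> \<open>h < ts\<close> show False by auto
qed

lemma norm_diff_le_integral_norm_derivative:
  fixes X :: "real \<Rightarrow> 'a::banach"
  assumes "a \<le> b"
    and "\<And>x. x \<in> {a..b} \<Longrightarrow> (X has_vector_derivative X' x) (at x within {a..b})"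
    and "(\<lambda>x. norm (X' x)) integrable_on {a..b}"
  shows "norm (X b - X a) \<le> integral {a..b} (\<lambda>x. norm (X' x))"
proof -
  have "(X' has_integral (X b - X a)) {a..b}"
    by (rule fundamental_theorem_of_calculus[OF assms(1,2)])
  then show ?thesis
    using integral_norm_bound_integral[OF _ assms(3), of X'] by (auto simp: integral_unique)
qed

lemma polar_vector_derivative:
  fixes \<rho> :: "real \<Rightarrow> real"
  assumes "(\<rho> has_real_derivative \<rho>') (at \<theta> within S)"
  shows "((\<lambda>x. \<rho> x *\<^sub>R cis x) has_vector_derivative Complex \<rho>' (\<rho> \<theta>) * cis \<theta>) (at \<theta> within S)"
proof -
  have "(\<rho> has_derivative (\<lambda>h. h * \<rho>')) (at \<theta> within S)"
    using assms unfolding has_field_derivative_def by (simp add: mult.commute[of _ \<rho>'])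
  then show ?thesis
    by (auto intro!: derivative_eq_intros simp: has_vector_derivative_def complex_eq_iff algebra_simps)
qed

lemma norm_antipodal_polar_points:
  fixes r0 r1 :: real
  assumes "r0 \<ge> 0" "r1 \<ge> 0"
  shows "norm (r1 *\<^sub>R cis (\<theta> + pi) - r0 *\<^sub>R cis \<theta>) = r0 + r1"
proof -
  have "r1 *\<^sub>R cis (\<theta> + pi) - r0 *\<^sub>R cis \<theta> = - ((r0 + r1) *\<^sub>R cis \<theta>)"
    by (simp add: cis_mult[symmetric] algebra_simps)
  then show ?thesis using assms by simp
qed

lemma arctan_quotient_derivative:
  fixes f g :: "real \<Rightarrow> real"
  assumes "(f has_real_derivative f') (at x)" "(g has_real_derivative g') (at x)" "g x \<noteq> 0"
  shows "((\<lambda>x. arctan (f x / g x)) has_real_derivative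
    (f' * g x - f x * g') / ((f x)\<^sup>2 + (g x)\<^sup>2)) (at x)"
proof -
  have "1 + (f x / g x)\<^sup>2 = ((f x)\<^sup>2 + (g x)\<^sup>2) / (g x)\<^sup>2"
    using assms(3) by (simp add: field_simps)
  then have "inverse (1 + (f x / g x)\<^sup>2) * ((f' * g x - f x * g') / (g x * g x))
      = (f' * g x - f x * g') / ((f x)\<^sup>2 + (g x)\<^sup>2)"
    using assms(3) by (simp add: power2_eq_square)
  then show ?thesis
    using DERIV_chain2[OF DERIV_arctan DERIV_divide[OF assms]] by simp
qed

text \<open>
  Read \<open>q, s, s'\<close> as \<open>r\<^sub>\<theta>\<^sub>\<theta>, r\<^sub>t, r\<^sub>\<theta>\<^sub>t\<close>: the assumption on \<open>s\<close> is the flow equation and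
  \<open>\<kappa>\<close> is the curvature of the polar curve. The left side is \<open>g\<^sub>t\<close>; the first three terms
  on the right form the \<open>\<theta>\<close>-derivative of \<open>r\<^sub>\<theta> r\<^sub>t / g + a arctan (r\<^sub>\<theta> / r)\<close>.
\<close>
lemma length_rate_identity:
  fixes r p q s s' G a :: real
  assumes r: "r > 0" and G: "G > 0" and G2: "G\<^sup>2 = r\<^sup>2 + p\<^sup>2"
    and s: "s = q / G\<^sup>2 - 2 * p\<^sup>2 / (r * G\<^sup>2) - r / G\<^sup>2 + a * G / r"
  defines "\<kappa> \<equiv> (r\<^sup>2 + 2 * p\<^sup>2 - q * r) / G ^ 3"
  shows "(r * s + p * s') / G =
    (q * s + p * s') / G - p * s * (r * p + p * q) / G ^ 3 + a * (q * r - p\<^sup>2) / G\<^sup>2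
      - a + a\<^sup>2 * G - G * (\<kappa> - a)\<^sup>2"
  unfolding s \<kappa>_def using r G by (simp add: field_simps) (use G2 in algebra)

lemma critical_slope_coefficient_neg:
  fixes p r G L :: real
  assumes r: "r > 0" and L: "L > 0" and G2: "G\<^sup>2 = r\<^sup>2 + p\<^sup>2" and "G \<ge> 0"
    and short_radius: "2 * r < L" and steep: "3 * L / pi < \<bar>p\<bar>"
  shows "2 * p ^ 4 + 5 * r\<^sup>2 * p\<^sup>2 + r ^ 4 - 2 * pi / L * p\<^sup>2 * G ^ 3 < 0"
proof -
  define P where "P = \<bar>p\<bar>"
  have p_powers: "p\<^sup>2 = P\<^sup>2" "p ^ 4 = P ^ 4" by (simp_all add: P_def power_even_abs)
  have "3 * L < pi * P" using steep by (metis P_def divide_less_eq mult.commute pi_gt_zero)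
  have "P > 0" using steep L unfolding P_def by (smt (verit) divide_pos_pos pi_gt_zero)
  have "6 < 2 * pi * P / L" using \<open>3 * L < pi * P\<close> by (subst pos_less_divide_eq[OF L]) linarith
  then have "6 * P ^ 4 < 2 * pi * P / L * P ^ 4"
    using \<open>P > 0\<close> by (intro mult_strict_right_mono) auto
  also have "\<dots> = 2 * pi / L * (P\<^sup>2 * P ^ 3)" by (simp add: eval_nat_numeral)
  also have "\<dots> \<le> 2 * pi / L * (p\<^sup>2 * G ^ 3)"
  proof -
    have "P\<^sup>2 \<le> G\<^sup>2" using G2 p_powers by simp
    then have "P \<le> G" using \<open>G \<ge> 0\<close> by (rule power2_le_imp_le)
    then have "P ^ 3 \<le> G ^ 3" using \<open>P > 0\<close> by (intro power_mono) auto
    then show ?thesis unfolding p_powers using L by (intro mult_left_mono) auto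
  qed
  finally have steep_term: "6 * P ^ 4 < 2 * pi / L * p\<^sup>2 * G ^ 3" by simp
  have "pi * P < 4 * P" using pi_less_4 \<open>P > 0\<close> by simp
  then have "r < 2 / 3 * P" using short_radius \<open>3 * L < pi * P\<close> by linarith
  then have r2: "r\<^sup>2 \<le> (2 / 3 * P)\<^sup>2" and r4: "r ^ 4 \<le> (2 / 3 * P) ^ 4"
    using r by (auto intro: power_mono)
  have "5 * r\<^sup>2 * p\<^sup>2 \<le> 5 * (2 / 3 * P)\<^sup>2 * P\<^sup>2"
    unfolding p_powers by (rule mult_right_mono) (use r2 in auto)
  moreover have "5 * (2 / 3 * P)\<^sup>2 * P\<^sup>2 = 20 / 9 * P ^ 4" by (simp add: eval_nat_numeral)
  moreover have "(2 / 3 * P) ^ 4 = 16 / 81 * P ^ 4" by (simp add: eval_nat_numeral)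
  moreover have "P ^ 4 > 0" using \<open>P > 0\<close> by simp
  ultimately show ?thesis using steep_term p_powers r4 by linarith
qed

locale polar_area_preserving_flow =
  fixes r :: "real \<Rightarrow> real \<Rightarrow> real"
    and D :: "nat \<Rightarrow> nat \<Rightarrow> real \<Rightarrow> real \<Rightarrow> real"
    and \<omega> :: real
  assumes omega_pos: "\<omega> > 0"
    and smooth: "smooth_partials \<omega> r D"
    and periodic: "\<And>\<theta> t. t \<in> {0..<\<omega>} \<Longrightarrow> r (\<theta> + 2*pi) t = r \<theta> t"
    and pos: "\<And>\<theta> t. t \<in> {0..<\<omega>} \<Longrightarrow> r \<theta> t > 0"
    and pde: "\<And>\<theta> t. t \<in> {0..<\<omega>} \<Longrightarrow>
       D 0 1 \<theta> t =
         D 2 0 \<theta> t / (polar_g D \<theta> t)\<^sup>2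
         - 2 * (D 1 0 \<theta> t)\<^sup>2 / (r \<theta> t * (polar_g D \<theta> t)\<^sup>2)
         - r \<theta> t / (polar_g D \<theta> t)\<^sup>2
         + 2 * pi * polar_g D \<theta> t / (r \<theta> t * polar_length D t)"
begin

lemma partial_zero_zero: "D 0 0 = r"
  using smooth unfolding smooth_partials_def by simp

lemma partial_theta:
  "t \<in> {0..<\<omega>} \<Longrightarrow> ((\<lambda>x. D i j x t) has_real_derivative D (Suc i) j \<theta> t) (at \<theta>)"
  using smooth unfolding smooth_partials_def by blast

lemma partial_time:
  "t \<in> {0..<\<omega>} \<Longrightarrow>
    ((\<lambda>s. D i j \<theta> s) has_real_derivative D i (Suc j) \<theta> t) (at t within {0..<\<omega>})"
  using smooth unfolding smooth_partials_def by blast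

lemma continuous_on_partial: "continuous_on (UNIV \<times> {0..<\<omega>}) (\<lambda>(\<theta>, t). D i j \<theta> t)"
  using smooth unfolding smooth_partials_def by blast

lemma continuous_on_partial_theta: "t \<in> {0..<\<omega>} \<Longrightarrow> continuous_on S (\<lambda>\<theta>. D i j \<theta> t)"
  by (rule continuous_on_compose2[OF continuous_on_partial, of _ "\<lambda>\<theta>. (\<theta>, t)", simplified])
    (auto intro!: continuous_intros)

lemma theta_partials:
  assumes "t \<in> {0..<\<omega>}"
  shows "((\<lambda>x. r x t) has_real_derivative D 1 0 \<theta> t) (at \<theta>)"
    and "((\<lambda>x. D 0 1 x t) has_real_derivative D 1 1 \<theta> t) (at \<theta>)"
    and "((\<lambda>x. D 1 j x t) has_real_derivative D 2 j \<theta> t) (at \<theta>)"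
    and "((\<lambda>x. D 2 j x t) has_real_derivative D 3 j \<theta> t) (at \<theta>)"
  using partial_theta[OF assms, of 0 0 \<theta>] partial_theta[OF assms, of 0 1 \<theta>]
    partial_theta[OF assms, of 1 j \<theta>] partial_theta[OF assms, of 2 j \<theta>]
  by (simp_all add: partial_zero_zero numeral_2_eq_2 numeral_3_eq_3)

lemma time_partials:
  assumes "t \<in> {0..<\<omega>}"
  shows "((\<lambda>s. r \<theta> s) has_real_derivative D 0 1 \<theta> t) (at t within {0..<\<omega>})"
    and "((\<lambda>s. D 1 0 \<theta> s) has_real_derivative D 1 1 \<theta> t) (at t within {0..<\<omega>})"
  using partial_time[OF assms, of 0 0 \<theta>] partial_time[OF assms, of 1 0 \<theta>]
  by (simp_all add: partial_zero_zero)

lemma periodic_theta_partial: "t \<in> {0..<\<omega>} \<Longrightarrow> D i 0 (\<theta> + 2*pi) t = D i 0 \<theta> t"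
proof (induction i arbitrary: \<theta>)
  case 0
  then show ?case using periodic by (simp add: partial_zero_zero)
next
  case (Suc i)
  have "((\<lambda>x. D i 0 (x + 2*pi) t) has_real_derivative D (Suc i) 0 (\<theta> + 2*pi) t) (at \<theta>)"
    using DERIV_chain2[OF partial_theta[OF Suc.prems] DERIV_add[OF DERIV_ident DERIV_const]]
    by simp
  then have "((\<lambda>x. D i 0 x t) has_real_derivative D (Suc i) 0 (\<theta> + 2*pi) t) (at \<theta>)"
    using Suc by simp
  then show ?case using DERIV_unique partial_theta[OF Suc.prems] by blast
qed

lemma polar_g_sq: "(polar_g D \<theta> t)\<^sup>2 = (r \<theta> t)\<^sup>2 + (D 1 0 \<theta> t)\<^sup>2"
  unfolding polar_g_def by (simp add: partial_zero_zero)

lemma radius_le_polar_g: "t \<in> {0..<\<omega>} \<Longrightarrow> r \<theta> t \<le> polar_g D \<theta> t"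
  unfolding polar_g_def partial_zero_zero using pos[of t \<theta>] by (simp add: real_le_rsqrt)

lemma polar_g_pos: "t \<in> {0..<\<omega>} \<Longrightarrow> polar_g D \<theta> t > 0"
  using radius_le_polar_g[of t \<theta>] pos[of t \<theta>] by linarith

lemma periodic_polar_g: "t \<in> {0..<\<omega>} \<Longrightarrow> polar_g D (\<theta> + 2*pi) t = polar_g D \<theta> t"
  unfolding polar_g_def using periodic_theta_partial by simp

lemma continuous_on_polar_g: "t \<in> {0..<\<omega>} \<Longrightarrow> continuous_on S (\<lambda>\<theta>. polar_g D \<theta> t)"
  unfolding polar_g_def by (intro continuous_intros continuous_on_partial_theta)

lemma integrable_polar_g: "t \<in> {0..<\<omega>} \<Longrightarrow> (\<lambda>\<theta>. polar_g D \<theta> t) integrable_on {a..b}"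
  by (intro integrable_continuous_interval continuous_on_polar_g)

lemma polar_curve_chord_le_arc:
  assumes "t \<in> {0..<\<omega>}" "a \<le> b"
  shows "norm (r b t *\<^sub>R cis b - r a t *\<^sub>R cis a) \<le> integral {a..b} (\<lambda>\<theta>. polar_g D \<theta> t)"
proof -
  have speed: "norm (Complex (D 1 0 \<theta> t) (r \<theta> t) * cis \<theta>) = polar_g D \<theta> t" for \<theta>
    by (simp add: norm_mult complex_norm polar_g_def partial_zero_zero add.commute)
  show ?thesis
    using norm_diff_le_integral_norm_derivative[OF \<open>a \<le> b\<close>, of "\<lambda>\<theta>. r \<theta> t *\<^sub>R cis \<theta>"
        "\<lambda>\<theta>. Complex (D 1 0 \<theta> t) (r \<theta> t) * cis \<theta>"]
      polar_vector_derivative[OF DERIV_subset[OF theta_partials(1)[OF \<open>t \<in> {0..<\<omega>}\<close>]]]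
      integrable_polar_g[OF \<open>t \<in> {0..<\<omega>}\<close>]
    unfolding speed by blast
qed

lemma antipodal_radii_le_half_length:
  assumes t: "t \<in> {0..<\<omega>}" and "\<theta> \<in> {0..pi}"
  shows "2 * (r \<theta> t + r (\<theta> + pi) t) \<le> polar_length D t"
proof -
  define X where "X = (\<lambda>\<theta>. r \<theta> t *\<^sub>R cis \<theta>)"
  define I where "I = (\<lambda>a b. integral {a..b} (\<lambda>\<theta>. polar_g D \<theta> t))"
  have ordered: "0 \<le> \<theta>" "\<theta> \<le> \<theta> + pi" "\<theta> + pi \<le> 2*pi" using \<open>\<theta> \<in> {0..pi}\<close> by auto
  have "X (2*pi) = X 0" using periodic[OF t, of 0] by (simp add: X_def)
  then have "X (\<theta> + pi) - X \<theta> = - ((X \<theta> - X 0) + (X (2*pi) - X (\<theta> + pi)))" by simp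
  then have "norm (X (\<theta> + pi) - X \<theta>) \<le> norm (X \<theta> - X 0) + norm (X (2*pi) - X (\<theta> + pi))"
    by (metis norm_minus_cancel norm_triangle_ineq)
  moreover have "norm (X (\<theta> + pi) - X \<theta>) = r \<theta> t + r (\<theta> + pi) t"
    unfolding X_def by (rule norm_antipodal_polar_points) (use pos[OF t] in \<open>auto intro: less_imp_le\<close>)
  moreover have "I 0 \<theta> + I \<theta> (\<theta> + pi) + I (\<theta> + pi) (2*pi) = polar_length D t"
    unfolding I_def polar_length_def using ordered integrable_polar_g[OF t]
    by (simp add: Henstock_Kurzweil_Integration.integral_combine)
  moreover have "norm (X b - X a) \<le> I a b" if "a \<le> b" for a b
    unfolding X_def I_def by (rule polar_curve_chord_le_arc[OF t that])
  ultimately show ?thesis using ordered by smt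
qed

lemma twice_radius_lt_length:
  assumes t: "t \<in> {0..<\<omega>}"
  shows "2 * r \<theta> t < polar_length D t"
proof -
  have "periodic_fun_simple (\<lambda>\<theta>. r \<theta> t) (2*pi)" by unfold_locales (rule periodic[OF t])
  moreover have "2 * pi > 0" by simp
  ultimately obtain \<theta>0 where "\<theta>0 \<in> {0..2*pi}" "r \<theta>0 t = r \<theta> t"
    by (rule periodic_value_in_first_period)
  then consider "\<theta>0 \<in> {0..pi}" | "\<theta>0 - pi \<in> {0..pi}" by fastforce
  then show ?thesis
  proof cases
    case 1
    then show ?thesis
      using antipodal_radii_le_half_length[OF t] pos[OF t, of "\<theta>0 + pi"] \<open>r \<theta>0 t = r \<theta> t\<close>
      by fastforce
  next
    case 2
    then show ?thesis
      using antipodal_radii_le_half_length[OF t] pos[OF t, of "\<theta>0 - pi"] \<open>r \<theta>0 t = r \<theta> t\<close>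
      by fastforce
  qed
qed

lemma polar_length_pos: "t \<in> {0..<\<omega>} \<Longrightarrow> polar_length D t > 0"
  using twice_radius_lt_length[of t 0] pos[of t 0] by linarith

definition polar_g_rate :: "real \<Rightarrow> real \<Rightarrow> real" where
  "polar_g_rate \<theta> t = (r \<theta> t * D 0 1 \<theta> t + D 1 0 \<theta> t * D 1 1 \<theta> t) / polar_g D \<theta> t"

lemma polar_g_time_derivative:
  assumes "t \<in> {0..<\<omega>}"
  shows "((\<lambda>s. polar_g D \<theta> s) has_real_derivative polar_g_rate \<theta> t) (at t within {0..<\<omega>})"
proof -
  have "0 < (r \<theta> t)\<^sup>2 + (D 1 0 \<theta> t)\<^sup>2" using pos[OF assms, of \<theta>] by (simp add: add_pos_nonneg)
  then show ?thesis
    unfolding polar_g_def polar_g_rate_def partial_zero_zero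
    by (auto intro!: derivative_eq_intros time_partials[OF assms] partial_time[OF assms])
      (simp add: field_simps)
qed

lemma polar_g_theta_derivative:
  assumes "t \<in> {0..<\<omega>}"
  shows "((\<lambda>x. polar_g D x t) has_real_derivative
    (r \<theta> t * D 1 0 \<theta> t + D 1 0 \<theta> t * D 2 0 \<theta> t) / polar_g D \<theta> t) (at \<theta>)"
proof -
  have "0 < (r \<theta> t)\<^sup>2 + (D 1 0 \<theta> t)\<^sup>2" using pos[OF assms, of \<theta>] by (simp add: add_pos_nonneg)
  then show ?thesis
    unfolding polar_g_def partial_zero_zero
    by (auto intro!: derivative_eq_intros theta_partials[OF assms] partial_theta[OF assms])
      (simp add: field_simps numeral_2_eq_2)
qed

lemma arctan_slope_derivative:
  assumes "t \<in> {0..<\<omega>}"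
  shows "((\<lambda>x. arctan (D 1 0 x t / r x t)) has_real_derivative
    (D 2 0 \<theta> t * r \<theta> t - (D 1 0 \<theta> t)\<^sup>2) / (polar_g D \<theta> t)\<^sup>2) (at \<theta>)"
  unfolding polar_g_sq
  using arctan_quotient_derivative[OF theta_partials(3)[OF assms, where j=0 and \<theta>=\<theta>]
      theta_partials(1)[OF assms, where \<theta>=\<theta>]] pos[OF assms, of \<theta>]
  by (simp add: power2_eq_square add.commute)

lemma slope_flux_derivative:
  assumes "t \<in> {0..<\<omega>}"
  shows "((\<lambda>x. D 1 0 x t * D 0 1 x t / polar_g D x t) has_real_derivative
    (D 2 0 \<theta> t * D 0 1 \<theta> t + D 1 0 \<theta> t * D 1 1 \<theta> t) / polar_g D \<theta> t
      - D 1 0 \<theta> t * D 0 1 \<theta> t * (r \<theta> t * D 1 0 \<theta> t + D 1 0 \<theta> t * D 2 0 \<theta> t)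
        / (polar_g D \<theta> t) ^ 3) (at \<theta>)"
proof -
  have "polar_g D \<theta> t > 0" using polar_g_pos[OF assms] .
  then show ?thesis
    by (auto intro!: derivative_eq_intros theta_partials[OF assms] partial_theta[OF assms]
        polar_g_theta_derivative[OF assms]) (simp add: field_simps power3_eq_cube numeral_2_eq_2)
qed

lemma periodic_radius_rate:
  assumes t: "t \<in> {0..<\<omega>}"
  shows "D 0 1 (\<theta> + 2*pi) t = D 0 1 \<theta> t"
  using pde[OF t, of \<theta>] pde[OF t, of "\<theta> + 2*pi"]
  by (simp add: periodic[OF t] periodic_theta_partial[OF t] periodic_polar_g[OF t])

lemma continuous_on_polar_g_rate:
  "continuous_on ({0..<\<omega>} \<times> UNIV) (\<lambda>(t, \<theta>). polar_g_rate \<theta> t)"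
proof -
  have partial: "continuous_on ({0..<\<omega>} \<times> UNIV) (\<lambda>z. D i j (snd z) (fst z))" for i j
    by (rule continuous_on_compose2[OF continuous_on_partial, of _ "\<lambda>z. (snd z, fst z)", simplified])
      (auto intro!: continuous_intros)
  have "polar_g D (snd z) (fst z) \<noteq> 0" if "z \<in> {0..<\<omega>} \<times> UNIV" for z
    using polar_g_pos[of "fst z" "snd z"] that by auto
  then show ?thesis
    unfolding polar_g_rate_def unfolding case_prod_beta' polar_g_def partial_zero_zero[symmetric]
    by (intro continuous_intros partial) blast
qed

text \<open>
  \<open>\<theta> + \<pi>/2 - arctan (r\<^sub>\<theta> / r)\<close> is the tangent angle of the polar curve, so the arctan term
  has \<open>\<theta>\<close>-derivative \<open>1 - \<kappa> g\<close>; its periodicity expresses that the total curvature is \<open>2\<pi>\<close>.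
\<close>
definition angle_flux :: "real \<Rightarrow> real \<Rightarrow> real" where
  "angle_flux \<theta> t = D 1 0 \<theta> t * D 0 1 \<theta> t / polar_g D \<theta> t
    + 2 * pi / polar_length D t * arctan (D 1 0 \<theta> t / r \<theta> t)"

lemma angle_flux_derivative:
  assumes t: "t \<in> {0..<\<omega>}"
  shows "((\<lambda>x. angle_flux x t) has_real_derivative
    (D 2 0 \<theta> t * D 0 1 \<theta> t + D 1 0 \<theta> t * D 1 1 \<theta> t) / polar_g D \<theta> t
    - D 1 0 \<theta> t * D 0 1 \<theta> t * (r \<theta> t * D 1 0 \<theta> t + D 1 0 \<theta> t * D 2 0 \<theta> t) / (polar_g D \<theta> t) ^ 3
    + 2 * pi / polar_length D t * (D 2 0 \<theta> t * r \<theta> t - (D 1 0 \<theta> t)\<^sup>2) / (polar_g D \<theta> t)\<^sup>2) (at \<theta>)"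
  using DERIV_add[OF slope_flux_derivative[OF t, of \<theta>]
      DERIV_cmult[OF arctan_slope_derivative[OF t, of \<theta>], of "2 * pi / polar_length D t"]]
  unfolding angle_flux_def by simp

lemma periodic_angle_flux:
  assumes t: "t \<in> {0..<\<omega>}"
  shows "angle_flux (\<theta> + 2*pi) t = angle_flux \<theta> t"
  using periodic_radius_rate[OF t, of \<theta>]
  by (simp add: angle_flux_def periodic[OF t] periodic_theta_partial[OF t] periodic_polar_g[OF t])

lemma polar_g_rate_le_angle_flux_derivative:
  assumes t: "t \<in> {0..<\<omega>}"
  defines "a \<equiv> 2 * pi / polar_length D t"
  shows "polar_g_rate \<theta> t \<le> deriv (\<lambda>x. angle_flux x t) \<theta> - a + a\<^sup>2 * polar_g D \<theta> t"
proof -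
  have "D 0 1 \<theta> t = D 2 0 \<theta> t / (polar_g D \<theta> t)\<^sup>2 - 2 * (D 1 0 \<theta> t)\<^sup>2 / (r \<theta> t * (polar_g D \<theta> t)\<^sup>2)
      - r \<theta> t / (polar_g D \<theta> t)\<^sup>2 + a * polar_g D \<theta> t / r \<theta> t"
    using pde[OF t, of \<theta>] by (simp add: a_def)
  from length_rate_identity[OF pos[OF t] polar_g_pos[OF t] polar_g_sq this, of "D 1 1 \<theta> t"]
  show ?thesis
    unfolding polar_g_rate_def DERIV_imp_deriv[OF angle_flux_derivative[OF t]] a_def[symmetric]
    using polar_g_pos[OF t, of \<theta>] by (smt (verit) mult_nonneg_nonneg zero_le_power2)
qed

lemma integral_polar_g_rate_nonpos:
  assumes t: "t \<in> {0..<\<omega>}"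
  shows "integral {0..2*pi} (\<lambda>\<theta>. polar_g_rate \<theta> t) \<le> 0"
proof -
  define a where "a = 2 * pi / polar_length D t"
  have "((\<lambda>x. angle_flux x t) has_real_derivative deriv (\<lambda>x. angle_flux x t) \<theta>) (at \<theta>)" for \<theta>
    using DERIV_imp_deriv[OF angle_flux_derivative[OF t]] angle_flux_derivative[OF t] by metis
  then have "(deriv (\<lambda>x. angle_flux x t) has_integral angle_flux (2*pi) t - angle_flux 0 t) {0..2*pi}"
    by (intro fundamental_theorem_of_calculus)
      (auto simp: has_real_derivative_iff_has_vector_derivative[symmetric] intro: DERIV_subset)
  moreover have "angle_flux (2*pi) t = angle_flux 0 t" using periodic_angle_flux[OF t, of 0] by simp
  moreover have "((\<lambda>\<theta>. polar_g D \<theta> t) has_integral polar_length D t) {0..2*pi}"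
    unfolding polar_length_def by (rule integrable_integral[OF integrable_polar_g[OF t]])
  ultimately have "((\<lambda>\<theta>. deriv (\<lambda>x. angle_flux x t) \<theta> - a + a\<^sup>2 * polar_g D \<theta> t) has_integral
      0 - 2 * pi * a + a\<^sup>2 * polar_length D t) {0..2*pi}"
    by (intro has_integral_add has_integral_diff has_integral_mult_right)
      (auto simp: has_integral_const_real[of a 0 "2*pi", simplified])
  moreover have "0 - 2 * pi * a + a\<^sup>2 * polar_length D t = 0"
    using polar_length_pos[OF t] by (simp add: a_def power2_eq_square)
  moreover have "(\<lambda>\<theta>. polar_g_rate \<theta> t) integrable_on {0..2*pi}"
    by (rule integrable_continuous_interval, rule continuous_on_compose2[OF continuous_on_polar_g_rate,
        of _ "\<lambda>\<theta>. (t, \<theta>)", simplified]) (use t in \<open>auto intro!: continuous_intros\<close>)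
  ultimately show ?thesis
    using polar_g_rate_le_angle_flux_derivative[OF t]
    by (intro has_integral_le[OF integrable_integral]) (auto simp: a_def)
qed

lemma polar_length_derivative:
  assumes "t \<in> {0..<\<omega>}"
  shows "(polar_length D has_real_derivative integral {0..2*pi} (\<lambda>\<theta>. polar_g_rate \<theta> t))
    (at t within {0..<\<omega>})"
  unfolding polar_length_def[abs_def]
  by (rule leibniz_rule_field_derivative[where a=0 and b="2*pi", unfolded cbox_interval])
    (use assms in \<open>auto intro: polar_g_time_derivative integrable_polar_g convex_real_interval
      continuous_on_subset[OF continuous_on_polar_g_rate]\<close>)

lemma polar_length_le_initial:
  assumes "t \<in> {0..<\<omega>}"
  shows "polar_length D t \<le> polar_length D 0"
proof -
  have "{0..t} \<subseteq> {0..<\<omega>}" using assms by auto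
  have "((\<lambda>s. integral {0..2*pi} (\<lambda>\<theta>. polar_g_rate \<theta> s)) has_integral
      polar_length D t - polar_length D 0) {0..t}"
  proof (rule fundamental_theorem_of_calculus)
    fix s assume "s \<in> {0..t}"
    with \<open>{0..t} \<subseteq> {0..<\<omega>}\<close> show "(polar_length D has_vector_derivative
        integral {0..2*pi} (\<lambda>\<theta>. polar_g_rate \<theta> s)) (at s within {0..t})"
      using DERIV_subset[OF polar_length_derivative]
      unfolding has_real_derivative_iff_has_vector_derivative by blast
  qed (use assms in simp)
  then have "polar_length D t - polar_length D 0 \<le> 0"
    by (rule has_integral_le[OF _ has_integral_0])
      (use integral_polar_g_rate_nonpos \<open>{0..t} \<subseteq> {0..<\<omega>}\<close> in blast)
  then show ?thesis by simp
qed

lemma slope_rate_at_critical_point: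
  assumes t: "t \<in> {0..<\<omega>}" and crit: "D 2 0 \<theta> t = 0"
  shows "D 1 1 \<theta> t = D 3 0 \<theta> t / (polar_g D \<theta> t)\<^sup>2 + D 1 0 \<theta> t *
     (2 * (D 1 0 \<theta> t) ^ 4 + 5 * (r \<theta> t)\<^sup>2 * (D 1 0 \<theta> t)\<^sup>2 + (r \<theta> t) ^ 4
      - 2 * pi / polar_length D t * (D 1 0 \<theta> t)\<^sup>2 * (polar_g D \<theta> t) ^ 3)
     / ((r \<theta> t)\<^sup>2 * (polar_g D \<theta> t) ^ 4)"
proof -
  define F where "F = (\<lambda>x. D 2 0 x t / (polar_g D x t)\<^sup>2
    - 2 * (D 1 0 x t)\<^sup>2 / (r x t * (polar_g D x t)\<^sup>2) - r x t / (polar_g D x t)\<^sup>2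
    + 2 * pi * polar_g D x t / (r x t * polar_length D t))"
  have "(\<lambda>x. D 0 1 x t) = F" unfolding F_def using pde[OF t] by auto
  then have "(F has_real_derivative D 1 1 \<theta> t) (at \<theta>)" using theta_partials(2)[OF t] by simp
  moreover have "(F has_real_derivative D 3 0 \<theta> t / (polar_g D \<theta> t)\<^sup>2 + D 1 0 \<theta> t *
     (2 * (D 1 0 \<theta> t) ^ 4 + 5 * (r \<theta> t)\<^sup>2 * (D 1 0 \<theta> t)\<^sup>2 + (r \<theta> t) ^ 4
      - 2 * pi / polar_length D t * (D 1 0 \<theta> t)\<^sup>2 * (polar_g D \<theta> t) ^ 3)
     / ((r \<theta> t)\<^sup>2 * (polar_g D \<theta> t) ^ 4)) (at \<theta>)"
    unfolding F_def
    using pos[OF t, of \<theta>] polar_g_pos[OF t, of \<theta>] polar_length_pos[OF t] crit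
    by (auto intro!: derivative_eq_intros theta_partials[OF t]
        theta_partials(3)[OF t, unfolded One_nat_def] polar_g_theta_derivative[OF t])
      (simp add: field_simps, use polar_g_sq[of \<theta> t, unfolded One_nat_def] in algebra)
  ultimately show ?thesis by (rule DERIV_unique)
qed

lemma slope_times_rate_neg_at_max:
  assumes t: "t \<in> {0..<\<omega>}"
    and max: "\<And>\<phi>. (D 1 0 \<phi> t)\<^sup>2 \<le> (D 1 0 \<theta> t)\<^sup>2"
    and steep: "3 * polar_length D 0 / pi < \<bar>D 1 0 \<theta> t\<bar>"
  shows "D 1 0 \<theta> t * D 1 1 \<theta> t < 0"
proof -
  have sq_deriv: "((\<lambda>x. (D 1 0 x t)\<^sup>2) has_real_derivative 2 * D 1 0 x t * D 2 0 x t) (at x)" for x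
    using DERIV_power[OF theta_partials(3)[OF t, where j=0 and \<theta>=x], of 2] by (simp add: algebra_simps)
  have "0 < 3 * polar_length D 0 / pi" using polar_length_pos[of 0] omega_pos by simp
  then have "D 1 0 \<theta> t \<noteq> 0" using steep by auto
  moreover have "2 * D 1 0 \<theta> t * D 2 0 \<theta> t = 0"
    by (rule DERIV_local_max[OF sq_deriv zero_less_one]) (use max in auto)
  ultimately have crit: "D 2 0 \<theta> t = 0" by simp
  have "((\<lambda>x. 2 * D 1 0 x t * D 2 0 x t) has_real_derivative
      2 * D 2 0 \<theta> t * D 2 0 \<theta> t + 2 * D 1 0 \<theta> t * D 3 0 \<theta> t) (at \<theta>)"
    by (auto intro!: derivative_eq_intros theta_partials[OF t] theta_partials(3)[OF t, unfolded One_nat_def]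
        simp: algebra_simps)
  from second_derivative_nonpos_at_max[OF sq_deriv this max]
  have "D 1 0 \<theta> t * D 3 0 \<theta> t \<le> 0" using crit by simp
  moreover have "3 * polar_length D t / pi < \<bar>D 1 0 \<theta> t\<bar>"
    using polar_length_le_initial[OF t] steep by (smt (verit) divide_right_mono pi_gt_zero)
  then have "2 * (D 1 0 \<theta> t) ^ 4 + 5 * (r \<theta> t)\<^sup>2 * (D 1 0 \<theta> t)\<^sup>2 + (r \<theta> t) ^ 4
      - 2 * pi / polar_length D t * (D 1 0 \<theta> t)\<^sup>2 * (polar_g D \<theta> t) ^ 3 < 0"
    using critical_slope_coefficient_neg[OF pos[OF t] polar_length_pos[OF t] polar_g_sq
        less_imp_le[OF polar_g_pos[OF t]] twice_radius_lt_length[OF t]] by blast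
  moreover have "(r \<theta> t)\<^sup>2 * (polar_g D \<theta> t) ^ 4 > 0" "(polar_g D \<theta> t)\<^sup>2 > 0"
    using pos[OF t, of \<theta>] polar_g_pos[OF t, of \<theta>] by simp_all
  ultimately show ?thesis
    unfolding slope_rate_at_critical_point[OF t crit] distrib_left
    using \<open>D 1 0 \<theta> t \<noteq> 0\<close>
    by (smt (verit) divide_neg_pos divide_nonpos_pos mult.assoc mult_pos_neg power2_eq_square
        times_divide_eq_right zero_less_power2)
qed

lemma slope_bound:
  assumes init: "\<And>\<theta>. \<bar>D 1 0 \<theta> 0\<bar> \<le> K" and K: "3 * polar_length D 0 / pi \<le> K"
    and t: "t \<in> {0..<\<omega>}"
  shows "\<bar>D 1 0 \<theta> t\<bar> \<le> K"
proof -
  have "0 < 3 * polar_length D 0 / pi" using polar_length_pos[of 0] omega_pos by simp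
  then have "K \<ge> 0" using K by linarith
  have "(D 1 0 \<theta> t)\<^sup>2 \<le> K\<^sup>2"
  proof (rule periodic_max_principle[where c="2*pi" and P="\<lambda>\<theta> t. (D 1 0 \<theta> t)\<^sup>2"
        and P'="\<lambda>\<theta> t. 2 * D 1 0 \<theta> t * D 1 1 \<theta> t"])
    show "continuous_on (UNIV \<times> {0..<\<omega>}) (\<lambda>(\<theta>, t). (D 1 0 \<theta> t)\<^sup>2)"
      using continuous_on_power[OF continuous_on_partial[of 1 0], of 2] by (simp add: case_prod_beta')
    show "periodic_fun_simple (\<lambda>\<theta>. (D 1 0 \<theta> t)\<^sup>2) (2 * pi)" if "t \<in> {0..<\<omega>}" for t
      by unfold_locales (simp add: periodic_theta_partial[OF that])
    show "((\<lambda>s. (D 1 0 \<theta> s)\<^sup>2) has_real_derivative 2 * D 1 0 \<theta> t * D 1 1 \<theta> t)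
        (at t within {0..<\<omega>})" if "t \<in> {0..<\<omega>}" for \<theta> t
      using DERIV_power[OF time_partials(2)[OF that, where \<theta>=\<theta>], of 2] by (simp add: algebra_simps)
    show "(D 1 0 \<theta> 0)\<^sup>2 \<le> K\<^sup>2" for \<theta>
      using init[of \<theta>] \<open>K \<ge> 0\<close> by (simp add: abs_le_square_iff[symmetric])
    show "2 * D 1 0 \<theta> t * D 1 1 \<theta> t < 0"
      if "t \<in> {0<..<\<omega>}" "\<And>\<phi>. (D 1 0 \<phi> t)\<^sup>2 \<le> (D 1 0 \<theta> t)\<^sup>2" "K\<^sup>2 < (D 1 0 \<theta> t)\<^sup>2"
      for \<theta> t
    proof -
      have "K < \<bar>D 1 0 \<theta> t\<bar>" using that(3) \<open>K \<ge> 0\<close> by (simp add: abs_le_square_iff[symmetric] not_le[symmetric])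
      with slope_times_rate_neg_at_max[OF _ that(2)] that(1) K show ?thesis by simp
    qed
  qed (use t in simp_all)
  then show ?thesis using \<open>K \<ge> 0\<close> by (simp add: abs_le_square_iff[symmetric])
qed


lemma initial_slope_le_Sup: "\<bar>D 1 0 \<theta> 0\<bar> \<le> Sup ((\<lambda>\<theta>. \<bar>D 1 0 \<theta> 0\<bar>) ` {0..2*pi})"
proof -
  have "0 \<in> {0..<\<omega>}" using omega_pos by simp
  then have "periodic_fun_simple (\<lambda>\<theta>. \<bar>D 1 0 \<theta> 0\<bar>) (2*pi)"
    by unfold_locales (simp add: periodic_theta_partial)
  moreover have "2 * pi > 0" by simp
  ultimately obtain y where y: "y \<in> {0..2*pi}" "\<bar>D 1 0 y 0\<bar> = \<bar>D 1 0 \<theta> 0\<bar>"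
    by (rule periodic_value_in_first_period)
  have "bdd_above ((\<lambda>\<theta>. \<bar>D 1 0 \<theta> 0\<bar>) ` {0..2*pi})"
    by (intro bounded_imp_bdd_above compact_imp_bounded compact_continuous_image compact_Icc
        continuous_intros continuous_on_partial_theta \<open>0 \<in> {0..<\<omega>}\<close>)
  then have "\<bar>D 1 0 y 0\<bar> \<le> Sup ((\<lambda>\<theta>. \<bar>D 1 0 \<theta> 0\<bar>) ` {0..2*pi})" by (rule cSUP_upper[OF y(1)])
  with y(2) show ?thesis by simp
qed
end

theorem lemma2p4:
  fixes r :: "real \<Rightarrow> real \<Rightarrow> real"
    and D :: "nat \<Rightarrow> nat \<Rightarrow> real \<Rightarrow> real \<Rightarrow> real"
    and \<omega> :: real
  assumes omega_pos: "\<omega> > 0"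
    and smooth: "smooth_partials \<omega> r D"
    and periodic: "\<And>\<theta> t. t \<in> {0..<\<omega>} \<Longrightarrow> r (\<theta> + 2*pi) t = r \<theta> t"
    and pos: "\<And>\<theta> t. t \<in> {0..<\<omega>} \<Longrightarrow> r \<theta> t > 0"
    and pde: "\<And>\<theta> t. t \<in> {0..<\<omega>} \<Longrightarrow>
       D 0 1 \<theta> t =
         D 2 0 \<theta> t / (polar_g D \<theta> t)\<^sup>2
         - 2 * (D 1 0 \<theta> t)\<^sup>2 / (r \<theta> t * (polar_g D \<theta> t)\<^sup>2)
         - r \<theta> t / (polar_g D \<theta> t)\<^sup>2
         + 2 * pi * polar_g D \<theta> t / (r \<theta> t * polar_length D t)"
    and lower: "\<exists>c>0. \<forall>\<theta>. \<forall>t\<in>{0..<\<omega>}. r \<theta> t \<ge> c"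
  shows "\<forall>\<theta>. \<forall>t\<in>{0..<\<omega>}.
           r \<theta> t \<le> polar_length D 0 / 2 \<and>
           \<bar>D 1 0 \<theta> t\<bar> \<le> max (Sup ((\<lambda>\<theta>. \<bar>D 1 0 \<theta> 0\<bar>) ` {0..2*pi}))
                                   (3 * polar_length D 0 / pi)"
proof -
  interpret polar_area_preserving_flow r D \<omega>
    using omega_pos smooth periodic pos pde by unfold_locales
  show ?thesis
  proof (intro allI ballI conjI)
    fix \<theta> t assume t: "t \<in> {0..<\<omega>}"
    show "r \<theta> t \<le> polar_length D 0 / 2"
      using twice_radius_lt_length[OF t, of \<theta>] polar_length_le_initial[OF t] by linarith
    show "\<bar>D 1 0 \<theta> t\<bar> \<le> max (Sup ((\<lambda>\<theta>. \<bar>D 1 0 \<theta> 0\<bar>) ` {0..2*pi})) (3 * polar_length D 0 / pi)"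
      using initial_slope_le_Sup by (intro slope_bound[OF _ _ t] max.coboundedI1 max.cobounded2)
  qed
qed

end
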